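(* Let $n \geq 1$ and $0 \le k \le n$. The number of Grassmannian permutations of $[n]$ with exactly $k$ fixed points is $1$ if $k = n$, $0$ if $k = n-1$, and $(k+1)2^{n-k-2}$ if $0 \le k \le n-2$.
   Context: A permutation $\pi = \pi_1\cdots\pi_n$ of $[n]=\{1,\dots,n\}$ (written in one-line notation) is Grassmannian if it has at most one descent, i.e. at most one index $i$ with $\pi_i > \pi_{i+1}$. A fixed point of $\pi$ is an $i \in [n]$ with $\pi_i = i$. *)

theory Defs
  imports "HOL-Combinatorics.Permutations"
begin

definition descents :: "nat \<Rightarrow> (nat \<Rightarrow> nat) \<Rightarrow> nat set" where
  "descents n \<pi> = {i. 1 \<le> i \<and> i < n \<and> \<pi> i > \<pi> (Suc i)}"

definition grassmannian :: "nat \<Rightarrow> (nat \<Rightarrow> nat) \<Rightarrow> bool" where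
  "grassmannian n \<pi> \<longleftrightarrow> card (descents n \<pi>) \<le> 1"

definition fixed_points :: "nat \<Rightarrow> (nat \<Rightarrow> nat) \<Rightarrow> nat set" where
  "fixed_points n \<pi> = {i \<in> {1..n}. \<pi> i = i}"

end

theory Submission
  imports Defs
begin

text \<open>A permutation of [n] with at most one descent, at position D say, is increasing on
  {1..D} and on {D+1..n}, so it is determined by the set S of its first D values: it lists S
  increasingly, then the rest of [n] increasingly. Apart from the identity, which arises from
  every initial segment S = {1..D}, distinct sets give distinct permutations, because the
  descent sits at position |S|. If S is not an initial segment, let a + 1 be the least number
  outside S and n - b the largest element of S; then the fixed points are exactly 1..a and the
  last b points. So the non-identity permutations with k fixed points correspond to the sets
  {1..a} \<union> {n - b} \<union> U with a + b = k and U an arbitrary subset of the n - k - 2 numbers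
  strictly between a + 1 and n - b, and there are (k + 1) 2^(n-k-2) of them.\<close>

definition rank :: "nat set \<Rightarrow> nat \<Rightarrow> nat" where
  "rank A j = card {x \<in> A. x \<le> j}"

lemma finite_rank_set [simp]: "finite {x \<in> A. x \<le> (j::nat)}"
  by (rule finite_subset[of _ "{..j}"]) auto

lemma rank_pos: "j \<in> A \<Longrightarrow> 0 < rank A j"
  unfolding rank_def by (subst card_gt_0_iff) auto

lemma rank_le_card: "finite A \<Longrightarrow> rank A j \<le> card A"
  unfolding rank_def by (intro card_mono) auto

lemma rank_strict_mono_on: "strict_mono_on A (rank A)"
proof (rule strict_mono_onI)
  fix x y assume "x \<in> A" "y \<in> A" "x < y"
  then have "{z \<in> A. z \<le> x} \<subset> {z \<in> A. z \<le> y}" by force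
  then show "rank A x < rank A y" unfolding rank_def by (simp add: psubset_card_mono)
qed

lemma rank_eq_card_iff:
  assumes "finite A"
  shows "rank A j = card A \<longleftrightarrow> A \<subseteq> {..j}"
proof
  assume "rank A j = card A"
  then have "{x \<in> A. x \<le> j} = A"
    using card_subset_eq[OF assms, of "{x \<in> A. x \<le> j}"] by (simp add: rank_def)
  then show "A \<subseteq> {..j}" by auto
next
  assume "A \<subseteq> {..j}"
  then have "{x \<in> A. x \<le> j} = A" by auto
  then show "rank A j = card A" by (simp add: rank_def)
qed

lemma rank_eq_self_iff:
  assumes "0 \<notin> A"
  shows "rank A j = j \<longleftrightarrow> {1..j} \<subseteq> A"
proof -
  have sub: "{x \<in> A. x \<le> j} \<subseteq> {1..j}" using assms by (auto simp: Suc_le_eq intro: gr0I)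
  have "rank A j = j \<longleftrightarrow> {x \<in> A. x \<le> j} = {1..j}"
  proof
    assume "rank A j = j"
    then show "{x \<in> A. x \<le> j} = {1..j}"
      using card_subset_eq[OF finite_atLeastAtMost sub] by (simp add: rank_def)
  qed (simp add: rank_def)
  also have "\<dots> \<longleftrightarrow> {1..j} \<subseteq> A" using sub by fastforce
  finally show ?thesis .
qed

lemma rank_Un_disjoint: "A \<inter> B = {} \<Longrightarrow> rank (A \<union> B) j = rank A j + rank B j"
proof -
  assume "A \<inter> B = {}"
  moreover have "{x \<in> A \<union> B. x \<le> j} = {x \<in> A. x \<le> j} \<union> {x \<in> B. x \<le> j}" by auto
  ultimately show ?thesis unfolding rank_def by (auto intro: card_Un_disjoint)
qed

lemma rank_atLeastAtMost: "j \<le> n \<Longrightarrow> rank {1..n} j = j"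
proof -
  assume "j \<le> n"
  then have "{x \<in> {1..n}. x \<le> j} = {1..j}" by auto
  then show ?thesis by (simp add: rank_def)
qed

lemma rank_image_strict_mono_on:
  assumes f: "strict_mono_on {a..b} f" and i: "i \<in> {a..b}"
  shows "rank (f ` {a..b}) (f i) = Suc i - a"
proof -
  have "{x \<in> f ` {a..b}. x \<le> f i} = f ` {a..i}"
    using i strict_mono_on_less_eq[OF f] by fastforce
  moreover have "inj_on f {a..i}"
    using inj_on_subset[OF strict_mono_on_imp_inj_on[OF f]] i by auto
  ultimately show ?thesis by (simp add: rank_def card_image)
qed

text \<open>grass_perm n S is the permutation listing S, then {1..n} - S, increasingly in one-line
  notation; its inverse grass_inv n S sends each element to its position in that list.\<close>

definition grass_inv :: "nat \<Rightarrow> nat set \<Rightarrow> nat \<Rightarrow> nat" where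
  "grass_inv n S j =
     (if j \<in> S then rank S j else if j \<in> {1..n} then card S + rank ({1..n} - S) j else j)"

context
  fixes n :: nat and S :: "nat set"
  assumes S: "S \<subseteq> {1..n}"
begin

private lemma finite_S: "finite S"
  using S finite_subset by blast

lemma grass_inv_in_front: "j \<in> S \<Longrightarrow> grass_inv n S j \<in> {1..card S}"
proof -
  assume j: "j \<in> S"
  then have "grass_inv n S j = rank S j" by (simp add: grass_inv_def)
  then show ?thesis using rank_pos[OF j] rank_le_card[OF finite_S, of j] by simp
qed

lemma grass_inv_in_back: "j \<in> {1..n} - S \<Longrightarrow> grass_inv n S j \<in> {card S<..n}"
proof -
  assume j: "j \<in> {1..n} - S"
  have "rank ({1..n} - S) j \<le> n - card S"
    using rank_le_card[of "{1..n} - S" j] S finite_S by (simp add: card_Diff_subset)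
  moreover have "card S \<le> n" using card_mono[OF _ S] by simp
  moreover have "grass_inv n S j = card S + rank ({1..n} - S) j" using j by (simp add: grass_inv_def)
  ultimately show ?thesis using rank_pos[OF j] by simp
qed

lemma grass_inv_strict_mono_on_front: "strict_mono_on S (grass_inv n S)"
proof (rule strict_mono_onI)
  fix x y assume "x \<in> S" "y \<in> S" "x < y"
  then show "grass_inv n S x < grass_inv n S y"
    using strict_mono_onD[OF rank_strict_mono_on] by (simp add: grass_inv_def)
qed

lemma grass_inv_strict_mono_on_back: "strict_mono_on ({1..n} - S) (grass_inv n S)"
proof (rule strict_mono_onI)
  fix x y assume "x \<in> {1..n} - S" "y \<in> {1..n} - S" "x < y"
  then show "grass_inv n S x < grass_inv n S y"
    using strict_mono_onD[OF rank_strict_mono_on, of x "{1..n} - S" y] by (simp add: grass_inv_def)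
qed

lemma grass_inv_permutes: "grass_inv n S permutes {1..n}"
proof (rule inj_imp_permutes)
  have "grass_inv n S ` S \<subseteq> {1..card S}" "grass_inv n S ` ({1..n} - S) \<subseteq> {card S<..n}"
    using grass_inv_in_front grass_inv_in_back by blast+
  moreover have "{1..card S} \<inter> {card S<..n} = {}" by auto
  ultimately have "grass_inv n S ` S \<inter> grass_inv n S ` ({1..n} - S) = {}" by blast
  moreover have "S - ({1..n} - S) = S" "{1..n} - S - S = {1..n} - S" "S \<union> ({1..n} - S) = {1..n}"
    using S by auto
  ultimately show "inj_on (grass_inv n S) {1..n}"
    using strict_mono_on_imp_inj_on[OF grass_inv_strict_mono_on_front]
      strict_mono_on_imp_inj_on[OF grass_inv_strict_mono_on_back]
      inj_on_Un[of "grass_inv n S" S "{1..n} - S"] by simp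
  show "grass_inv n S x \<in> {1..n}" if "x \<in> {1..n}" for x
  proof (cases "x \<in> S")
    case True
    then show ?thesis using grass_inv_in_front[OF True] card_mono[OF _ S] by simp
  next
    case False
    then show ?thesis using grass_inv_in_back[of x] that by simp
  qed
  show "grass_inv n S x = x" if "x \<notin> {1..n}" for x
  proof -
    have "x \<notin> S" using that S by blast
    then show ?thesis unfolding grass_inv_def by (simp only: if_not_P that if_False)
  qed
qed simp

lemma grass_inv_front_eq_self_iff: "j \<in> S \<Longrightarrow> grass_inv n S j = j \<longleftrightarrow> {1..j} \<subseteq> S"
proof -
  have "0 \<notin> S" using S by auto
  then show "j \<in> S \<Longrightarrow> ?thesis" using rank_eq_self_iff[of S j] by (simp add: grass_inv_def)
qed

lemma grass_inv_back_eq_self_iff: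
  assumes j: "j \<in> {1..n} - S"
  shows "grass_inv n S j = j \<longleftrightarrow> S \<subseteq> {..<j}"
proof -
  have "rank S j + rank ({1..n} - S) j = j"
    using rank_Un_disjoint[of S "{1..n} - S" j] rank_atLeastAtMost[of j n] S j
    by (simp add: Un_absorb1)
  moreover have "grass_inv n S j = card S + rank ({1..n} - S) j"
    using j by (simp add: grass_inv_def)
  ultimately have "grass_inv n S j = j \<longleftrightarrow> rank S j = card S" by presburger
  also have "\<dots> \<longleftrightarrow> S \<subseteq> {..j}" by (rule rank_eq_card_iff[OF finite_S])
  also have "{..j} = insert j {..<j}" by auto
  also have "S \<subseteq> insert j {..<j} \<longleftrightarrow> S \<subseteq> {..<j}" using j by (simp add: subset_insert)
  finally show ?thesis .
qed

lemma grass_inv_initial_segment: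
  assumes "\<forall>x\<in>S. \<forall>y\<in>{1..n} - S. x < y"
  shows "grass_inv n S = id"
proof
  fix j
  show "grass_inv n S j = id j"
  proof (cases "j \<in> S")
    case True
    have "{1..j} \<subseteq> S"
    proof
      fix x assume x: "x \<in> {1..j}"
      show "x \<in> S"
      proof (rule ccontr)
        assume "x \<notin> S"
        moreover have "x \<in> {1..n}" using x True S by auto
        ultimately have "j < x" using assms True by blast
        then show False using x by simp
      qed
    qed
    then show ?thesis using True grass_inv_front_eq_self_iff by simp
  next
    case False
    show ?thesis
    proof (cases "j \<in> {1..n}")
      case True
      then have "S \<subseteq> {..<j}" using assms False by blast
      then show ?thesis using True False grass_inv_back_eq_self_iff by simp
    next
      case outside: False
      show ?thesis unfolding grass_inv_def by (simp only: if_not_P False outside if_False id_apply)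
    qed
  qed
qed

end

definition grass_perm :: "nat \<Rightarrow> nat set \<Rightarrow> nat \<Rightarrow> nat" where
  "grass_perm n S = inv (grass_inv n S)"

context
  fixes n :: nat and S :: "nat set"
  assumes S: "S \<subseteq> {1..n}"
begin

lemma grass_perm_permutes: "grass_perm n S permutes {1..n}"
  unfolding grass_perm_def by (rule permutes_inv[OF grass_inv_permutes[OF S]])

lemma grass_inv_grass_perm [simp]: "grass_inv n S (grass_perm n S i) = i"
  unfolding grass_perm_def by (rule permutes_inverses(1)[OF grass_inv_permutes[OF S]])

lemma grass_perm_grass_inv [simp]: "grass_perm n S (grass_inv n S j) = j"
  unfolding grass_perm_def by (rule permutes_inverses(2)[OF grass_inv_permutes[OF S]])

lemma grass_perm_in_iff:
  assumes i: "i \<in> {1..n}"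
  shows "grass_perm n S i \<in> S \<longleftrightarrow> i \<le> card S"
proof -
  have u: "grass_perm n S i \<in> {1..n}" using permutes_in_image[OF grass_perm_permutes] i by blast
  show ?thesis
  proof
    assume "grass_perm n S i \<in> S"
    then show "i \<le> card S" using grass_inv_in_front[OF S] by fastforce
  next
    assume "i \<le> card S"
    then show "grass_perm n S i \<in> S" using grass_inv_in_back[OF S, of "grass_perm n S i"] u by fastforce
  qed
qed

lemma grass_perm_image_front: "grass_perm n S ` {1..card S} = S"
proof
  have "card S \<le> n" using card_mono[OF _ S] by simp
  then show "grass_perm n S ` {1..card S} \<subseteq> S" using grass_perm_in_iff by auto
  show "S \<subseteq> grass_perm n S ` {1..card S}"
  proof
    fix x assume "x \<in> S"
    then have "grass_inv n S x \<in> {1..card S}" by (rule grass_inv_in_front[OF S])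
    then show "x \<in> grass_perm n S ` {1..card S}" using grass_perm_grass_inv by (metis imageI)
  qed
qed

lemma grass_perm_strict_mono_on_front: "strict_mono_on {1..card S} (grass_perm n S)"
proof (rule strict_mono_onI)
  fix i j assume ij: "i \<in> {1..card S}" "j \<in> {1..card S}" "i < j"
  then have "grass_perm n S i \<in> S" "grass_perm n S j \<in> S"
    using grass_perm_image_front by blast+
  then show "grass_perm n S i < grass_perm n S j"
    using strict_mono_on_less[OF grass_inv_strict_mono_on_front[OF S]] ij(3) by (metis grass_inv_grass_perm)
qed

lemma grass_perm_strict_mono_on_back: "strict_mono_on {card S<..n} (grass_perm n S)"
proof (rule strict_mono_onI)
  fix i j assume ij: "i \<in> {card S<..n}" "j \<in> {card S<..n}" "i < j"
  have "grass_perm n S i \<in> {1..n} - S" "grass_perm n S j \<in> {1..n} - S"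
    using ij grass_perm_in_iff permutes_in_image[OF grass_perm_permutes] by auto
  then show "grass_perm n S i < grass_perm n S j"
    using strict_mono_on_less[OF grass_inv_strict_mono_on_back[OF S]] ij(3) by (metis grass_inv_grass_perm)
qed

lemma descents_grass_perm: "descents n (grass_perm n S) \<subseteq> {card S}"
proof
  fix i assume i: "i \<in> descents n (grass_perm n S)"
  then have range: "1 \<le> i" "i < n" and desc: "grass_perm n S (Suc i) < grass_perm n S i"
    by (auto simp: descents_def)
  have "\<not> i < card S"
    using strict_mono_onD[OF grass_perm_strict_mono_on_front, of i "Suc i"] range desc by auto
  moreover have "\<not> card S < i"
    using strict_mono_onD[OF grass_perm_strict_mono_on_back, of i "Suc i"] range desc by auto
  ultimately show "i \<in> {card S}" by simp
qed

lemma grassmannian_grass_perm: "grassmannian n (grass_perm n S)"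
  unfolding grassmannian_def using card_mono[OF _ descents_grass_perm] by simp

lemma fixed_points_grass_perm:
  "fixed_points n (grass_perm n S) = {j \<in> {1..n}. grass_inv n S j = j}"
  unfolding fixed_points_def grass_perm_def
  using permutes_inv_eq[OF grass_inv_permutes[OF S]] by auto

end

lemma grass_perm_empty: "grass_perm n {} = id"
  unfolding grass_perm_def by (simp add: grass_inv_initial_segment)

lemma strict_mono_on_no_descents:
  assumes "inj p" "1 \<le> a" "b \<le> n" and no_desc: "\<forall>i\<in>{a..<b}. i \<notin> descents n p"
  shows "strict_mono_on {a..b} p"
proof (rule strict_mono_onI)
  have step: "p i < p (Suc i)" if "i \<in> {a..<b}" for i
  proof -
    have "\<not> p (Suc i) < p i" using no_desc that assms(2,3) by (auto simp: descents_def)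
    moreover have "p i \<noteq> p (Suc i)" using injD[OF assms(1)] by force
    ultimately show ?thesis by simp
  qed
  fix x y assume "x \<in> {a..b}" "y \<in> {a..b}" "x < y"
  then show "p x < p y" by (intro lift_Suc_mono_less_ivl[where f = p and N = "{a..<b}", OF step]) auto
qed

lemma grassmannian_increasing_blocks:
  assumes p: "p permutes {1..n}" and "grassmannian n p"
  obtains D where "D \<le> n" "strict_mono_on {1..D} p" "strict_mono_on {Suc D..n} p"
proof -
  have "finite (descents n p)" by (rule finite_subset[of _ "{1..<n}"]) (auto simp: descents_def)
  then have "\<forall>i\<in>descents n p. \<forall>j\<in>descents n p. i = j"
    using assms(2) card_le_Suc0_iff_eq by (auto simp: grassmannian_def)
  moreover have "\<forall>i\<in>descents n p. i \<le> n" by (auto simp: descents_def)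
  ultimately obtain D where D: "descents n p \<subseteq> {D}" "D \<le> n"
    by (cases "descents n p = {}") blast+
  show ?thesis
  proof (rule that[OF D(2)])
    show "strict_mono_on {1..D} p"
      using D by (intro strict_mono_on_no_descents[OF permutes_inj[OF p]]) auto
    show "strict_mono_on {Suc D..n} p"
      using D by (intro strict_mono_on_no_descents[OF permutes_inj[OF p]]) auto
  qed
qed

lemma grass_perm_of_increasing_blocks:
  assumes p: "p permutes {1..n}" and D: "D \<le> n"
    and mono_front: "strict_mono_on {1..D} p" and mono_back: "strict_mono_on {Suc D..n} p"
  shows "p = grass_perm n (p ` {1..D})"
proof -
  define S where "S = p ` {1..D}"
  have S: "S \<subseteq> {1..n}" using permutes_image[OF p] D unfolding S_def by auto
  have card_S: "card S = D"
    unfolding S_def using card_image[OF inj_on_subset[OF permutes_inj[OF p]]] by simp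
  have "{1..n} - S = p ` ({1..n} - {1..D})"
    unfolding S_def using image_set_diff[OF permutes_inj[OF p]] permutes_image[OF p] by simp
  also have "{1..n} - {1..D} = {Suc D..n}" by auto
  finally have co_S: "{1..n} - S = p ` {Suc D..n}" .
  have grass_inv_p: "grass_inv n S (p i) = i" for i
  proof -
    consider "i \<in> {1..D}" | "i \<in> {Suc D..n}" | "i \<notin> {1..n}" using D by force
    then show ?thesis
    proof cases
      case 1
      then have "p i \<in> S" unfolding S_def by blast
      then show ?thesis
        using rank_image_strict_mono_on[OF mono_front 1] by (simp add: grass_inv_def S_def)
    next
      case 2
      then have "p i \<in> {1..n} - S" unfolding co_S by blast
      then have "grass_inv n S (p i) = card S + rank ({1..n} - S) (p i)"
        by (simp add: grass_inv_def)
      also have "\<dots> = D + rank (p ` {Suc D..n}) (p i)" by (simp only: card_S co_S)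
      finally show ?thesis using rank_image_strict_mono_on[OF mono_back 2] 2 by simp
    next
      case 3
      then show ?thesis using permutes_not_in[OF p 3] permutes_not_in[OF grass_inv_permutes[OF S] 3]
        by simp
    qed
  qed
  show ?thesis
  proof
    fix x
    show "p x = grass_perm n (p ` {1..D}) x"
      unfolding grass_perm_def S_def[symmetric]
      using permutes_inv_eq[OF grass_inv_permutes[OF S]] grass_inv_p by metis
  qed
qed

lemma grassmannian_eq_grass_perm:
  assumes p: "p permutes {1..n}" and "grassmannian n p"
  obtains S where "S \<subseteq> {1..n}" "p = grass_perm n S"
proof -
  obtain D where D: "D \<le> n" "strict_mono_on {1..D} p" "strict_mono_on {Suc D..n} p"
    using grassmannian_increasing_blocks[OF assms] .
  have "p ` {1..D} \<subseteq> {1..n}" using permutes_image[OF p] D(1) by auto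
  then show ?thesis using that grass_perm_of_increasing_blocks[OF p D] by blast
qed

lemma no_descents_imp_id:
  assumes p: "p permutes {1..n}" and "descents n p = {}"
  shows "p = id"
proof -
  have "strict_mono_on {1..n} p"
    using assms by (intro strict_mono_on_no_descents[OF permutes_inj[OF p]]) auto
  then have "p = grass_perm n (p ` {1..0})"
    by (intro grass_perm_of_increasing_blocks[OF p]) (auto simp: strict_mono_on_def monotone_on_def)
  then show ?thesis using grass_perm_empty by simp
qed

lemma descents_grass_perm_not_id:
  assumes S: "S \<subseteq> {1..n}" and "grass_perm n S \<noteq> id"
  shows "descents n (grass_perm n S) = {card S}"
  using descents_grass_perm[OF S] no_descents_imp_id[OF grass_perm_permutes[OF S]] assms(2)
  by blast

lemma inj_on_grass_perm: "inj_on (grass_perm n) {S. S \<subseteq> {1..n} \<and> grass_perm n S \<noteq> id}"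
proof (rule inj_onI)
  fix S T assume "S \<in> {S. S \<subseteq> {1..n} \<and> grass_perm n S \<noteq> id}"
    and "T \<in> {S. S \<subseteq> {1..n} \<and> grass_perm n S \<noteq> id}" and eq: "grass_perm n S = grass_perm n T"
  then have S: "S \<subseteq> {1..n}" "grass_perm n S \<noteq> id" and T: "T \<subseteq> {1..n}" "grass_perm n T \<noteq> id"
    by auto
  have "card S = card T"
    using descents_grass_perm_not_id[OF S] descents_grass_perm_not_id[OF T] eq by simp
  then show "S = T"
    using grass_perm_image_front[OF S(1)] grass_perm_image_front[OF T(1)] eq by simp
qed

text \<open>Here a + 1 is the least number outside S and n - b the largest element of S; these are
  the sets whose permutation has fixed points exactly 1..a and the last b points.\<close>

definition framed_sets :: "nat \<Rightarrow> nat \<Rightarrow> nat \<Rightarrow> nat set set" where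
  "framed_sets n a b =
     {S. a + b + 2 \<le> n \<and> {1..a} \<subseteq> S \<and> Suc a \<notin> S \<and> n - b \<in> S \<and> S \<subseteq> {1..n - b}}"

lemma framed_sets_subset: "S \<in> framed_sets n a b \<Longrightarrow> S \<subseteq> {1..n}"
proof -
  assume "S \<in> framed_sets n a b"
  then have "S \<subseteq> {1..n - b}" by (simp add: framed_sets_def)
  moreover have "{1..n - b} \<subseteq> {1..n}" by auto
  ultimately show ?thesis by blast
qed

lemma grass_inv_fixed_points_framed:
  assumes "S \<in> framed_sets n a b"
  shows "{j \<in> {1..n}. grass_inv n S j = j} = {1..a} \<union> {n - b<..n}"
proof -
  have S: "S \<subseteq> {1..n}" using framed_sets_subset[OF assms] .
  have ab: "a + b + 2 \<le> n" and init: "{1..a} \<subseteq> S"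
    and gap: "Suc a \<notin> S" and last: "n - b \<in> S" and upper: "S \<subseteq> {1..n - b}"
    using assms by (simp_all add: framed_sets_def)
  have "grass_inv n S j = j \<longleftrightarrow> j \<in> {1..a} \<union> {n - b<..n}" if j: "j \<in> {1..n}" for j
  proof (cases "j \<in> S")
    case True
    have "{1..j} \<subseteq> S \<longleftrightarrow> j \<le> a"
    proof
      assume "{1..j} \<subseteq> S"
      then show "j \<le> a" using gap by (metis atLeastAtMost_iff le_add1 not_less_eq_eq plus_1_eq_Suc subsetD)
    qed (use init in auto)
    moreover have "j \<le> n - b" using True upper by auto
    ultimately show ?thesis using grass_inv_front_eq_self_iff[OF S True] j by auto
  next
    case False
    have "S \<subseteq> {..<j} \<longleftrightarrow> n - b < j" using last upper by auto
    moreover have "j \<notin> {1..a}" using False init by blast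
    ultimately show ?thesis using grass_inv_back_eq_self_iff[OF S, of j] False j by auto
  qed
  then show ?thesis using ab by auto
qed

lemma card_fixed_points_grass_perm_framed:
  assumes "S \<in> framed_sets n a b"
  shows "card (fixed_points n (grass_perm n S)) = a + b"
proof -
  have "a + b + 2 \<le> n" using assms by (simp add: framed_sets_def)
  then have "card ({1..a} \<union> {n - b<..n}) = a + b" by (subst card_Un_disjoint) auto
  then show ?thesis
    using fixed_points_grass_perm[OF framed_sets_subset[OF assms]]
      grass_inv_fixed_points_framed[OF assms] by simp
qed

lemma grass_perm_framed_not_id:
  assumes "S \<in> framed_sets n a b"
  shows "grass_perm n S \<noteq> id"
proof
  assume "grass_perm n S = id"
  moreover have "fixed_points n id = {1..n}" by (auto simp: fixed_points_def)
  ultimately have "card (fixed_points n (grass_perm n S)) = n" by simp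
  then show False using card_fixed_points_grass_perm_framed[OF assms] assms
    by (simp add: framed_sets_def)
qed

lemma framed_sets_eq_image:
  assumes "a + b + 2 \<le> n"
  shows "framed_sets n a b = (\<lambda>U. {1..a} \<union> {n - b} \<union> U) ` Pow {Suc (Suc a)..<n - b}"
proof
  show "framed_sets n a b \<subseteq> (\<lambda>U. {1..a} \<union> {n - b} \<union> U) ` Pow {Suc (Suc a)..<n - b}"
  proof
    fix S assume "S \<in> framed_sets n a b"
    then have init: "{1..a} \<subseteq> S" and gap: "Suc a \<notin> S" and last: "n - b \<in> S"
      and upper: "S \<subseteq> {1..n - b}"
      by (simp_all add: framed_sets_def)
    have "x \<in> {1..a} \<union> {n - b} \<union> (S \<inter> {Suc (Suc a)..<n - b})" if x: "x \<in> S" for x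
    proof -
      have "1 \<le> x" "x \<le> n - b" "x \<noteq> Suc a" using x upper gap by auto
      then show ?thesis using x by auto
    qed
    then have "S = {1..a} \<union> {n - b} \<union> (S \<inter> {Suc (Suc a)..<n - b})" using init last by blast
    then show "S \<in> (\<lambda>U. {1..a} \<union> {n - b} \<union> U) ` Pow {Suc (Suc a)..<n - b}" by blast
  qed
  show "(\<lambda>U. {1..a} \<union> {n - b} \<union> U) ` Pow {Suc (Suc a)..<n - b} \<subseteq> framed_sets n a b"
  proof
    fix S assume "S \<in> (\<lambda>U. {1..a} \<union> {n - b} \<union> U) ` Pow {Suc (Suc a)..<n - b}"
    then obtain U where U: "U \<subseteq> {Suc (Suc a)..<n - b}" and S: "S = {1..a} \<union> {n - b} \<union> U"
      by blast
    have "Suc a \<notin> U" "U \<subseteq> {1..n - b}" using U by auto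
    moreover have "Suc a \<noteq> n - b" "{1..a} \<subseteq> {1..n - b}" "n - b \<in> {1..n - b}" using assms by auto
    ultimately show "S \<in> framed_sets n a b" using assms unfolding S framed_sets_def by auto
  qed
qed

lemma card_framed_sets:
  "card (framed_sets n a b) = (if a + b + 2 \<le> n then 2 ^ (n - a - b - 2) else 0)"
proof (cases "a + b + 2 \<le> n")
  case True
  have "({1..a} \<union> {n - b} \<union> U) \<inter> {Suc (Suc a)..<n - b} = U"
    if "U \<in> Pow {Suc (Suc a)..<n - b}" for U
    using that by auto
  then have "inj_on (\<lambda>U. {1..a} \<union> {n - b} \<union> U) (Pow {Suc (Suc a)..<n - b})"
    by (metis inj_onI)
  then have "card (framed_sets n a b) = 2 ^ (n - b - Suc (Suc a))"
    by (simp add: framed_sets_eq_image[OF True] card_image card_Pow)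
  then show ?thesis using True by simp
qed (simp add: framed_sets_def)

lemma framed_sets_disjoint:
  assumes "a < a'"
  shows "framed_sets n a b \<inter> framed_sets n a' b' = {}"
proof -
  have "Suc a \<notin> S" "{1..a'} \<subseteq> S" if "S \<in> framed_sets n a b" "S \<in> framed_sets n a' b'" for S
    using that by (simp_all add: framed_sets_def)
  moreover have "Suc a \<in> {1..a'}" using assms by simp
  ultimately show ?thesis by blast
qed

lemma framed_sets_cover:
  assumes S: "S \<subseteq> {1..n}" and "grass_inv n S \<noteq> id"
  obtains a b where "S \<in> framed_sets n a b"
proof -
  obtain x y where "x \<in> S" "y \<in> {1..n} - S" "\<not> x < y"
    using assms grass_inv_initial_segment[OF S] by blast
  moreover from this have "x \<noteq> y" by blast
  ultimately have xy: "x \<in> S" "y \<in> {1..n} - S" "y < x" by simp_all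
  have fin: "finite S" using S finite_subset by blast
  define m where "m = Min ({1..n} - S)"
  define M where "M = Max S"
  have m: "m \<in> {1..n} - S" unfolding m_def by (rule Min_in) (use xy(2) in auto)
  have m_le: "m \<le> y" unfolding m_def by (rule Min_le) (use xy(2) in auto)
  have M: "M \<in> S" and M_ge: "\<And>z. z \<in> S \<Longrightarrow> z \<le> M"
    unfolding M_def using xy(1) fin by (auto intro: Max_in Max_ge)
  have "M \<le> n" using M S by auto
  have "S \<in> framed_sets n (m - 1) (n - M)"
    unfolding framed_sets_def
  proof (intro CollectI conjI)
    show "m - 1 + (n - M) + 2 \<le> n" using m_le xy(3) M_ge[OF xy(1)] m \<open>M \<le> n\<close> by auto
    show "{1..m - 1} \<subseteq> S"
    proof
      fix z assume "z \<in> {1..m - 1}"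
      moreover have "z \<in> {1..n} - S \<Longrightarrow> m \<le> z" unfolding m_def by (simp add: Min_le)
      ultimately show "z \<in> S" using m by fastforce
    qed
    show "Suc (m - 1) \<notin> S" "n - (n - M) \<in> S" using m M \<open>M \<le> n\<close> by auto
    show "S \<subseteq> {1..n - (n - M)}" using S M_ge \<open>M \<le> n\<close> by fastforce
  qed
  then show ?thesis by (rule that)
qed

lemma grassmannian_all_fixed:
  "{\<pi>. \<pi> permutes {1..n} \<and> grassmannian n \<pi> \<and> card (fixed_points n \<pi>) = n} = {id}"
proof -
  have "p = id" if p: "p permutes {1..n}" and "card (fixed_points n p) = n" for p
  proof -
    have "fixed_points n p \<subseteq> {1..n}" by (auto simp: fixed_points_def)
    then have "fixed_points n p = {1..n}"
      using card_subset_eq[of "{1..n}" "fixed_points n p"] that(2) by simp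
    then have "p x = x" if "x \<in> {1..n}" for x using that unfolding fixed_points_def by blast
    then show ?thesis using permutes_not_in[OF p] by (metis eq_id_iff)
  qed
  moreover have "descents n id = {}" "fixed_points n id = {1..n}"
    by (auto simp: descents_def fixed_points_def)
  ultimately show ?thesis by (auto simp: permutes_id grassmannian_def)
qed

lemma grassmannian_fixed_points_eq_image:
  assumes "k < n"
  shows "{\<pi>. \<pi> permutes {1..n} \<and> grassmannian n \<pi> \<and> card (fixed_points n \<pi>) = k}
           = grass_perm n ` (\<Union>a\<le>k. framed_sets n a (k - a))"
proof (intro equalityI subsetI)
  fix p assume "p \<in> {\<pi>. \<pi> permutes {1..n} \<and> grassmannian n \<pi> \<and> card (fixed_points n \<pi>) = k}"
  then have p: "p permutes {1..n}" "grassmannian n p" and fix_p: "card (fixed_points n p) = k"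
    by auto
  obtain S where S: "S \<subseteq> {1..n}" and p_eq: "p = grass_perm n S"
    using grassmannian_eq_grass_perm[OF p] .
  have "grass_inv n S \<noteq> id"
  proof
    assume "grass_inv n S = id"
    then have "fixed_points n p = {1..n}" unfolding p_eq fixed_points_grass_perm[OF S] by auto
    then show False using fix_p assms by simp
  qed
  then obtain a b where framed: "S \<in> framed_sets n a b" using framed_sets_cover[OF S] by blast
  then have "a + b = k" using card_fixed_points_grass_perm_framed fix_p p_eq by simp
  then have "S \<in> (\<Union>a\<le>k. framed_sets n a (k - a))" using framed by (intro UN_I[of a]) auto
  then show "p \<in> grass_perm n ` (\<Union>a\<le>k. framed_sets n a (k - a))" using p_eq by blast
next
  fix p assume "p \<in> grass_perm n ` (\<Union>a\<le>k. framed_sets n a (k - a))"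
  then obtain a S where a: "a \<le> k" and framed: "S \<in> framed_sets n a (k - a)"
    and p_eq: "p = grass_perm n S"
    by blast
  have S: "S \<subseteq> {1..n}" using framed_sets_subset[OF framed] .
  have "card (fixed_points n p) = k"
    using card_fixed_points_grass_perm_framed[OF framed] a p_eq by simp
  then show "p \<in> {\<pi>. \<pi> permutes {1..n} \<and> grassmannian n \<pi> \<and> card (fixed_points n \<pi>) = k}"
    using grass_perm_permutes[OF S] grassmannian_grass_perm[OF S] p_eq by simp
qed

lemma card_Union_framed_sets:
  "card (\<Union>a\<le>k. framed_sets n a (k - a)) = (if k + 2 \<le> n then (k + 1) * 2 ^ (n - k - 2) else 0)"
proof -
  have "framed_sets n a b \<subseteq> Pow {1..n}" for a b using framed_sets_subset by blast
  then have "finite (framed_sets n a b)" for a b by (rule finite_subset) simp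
  moreover have "framed_sets n a (k - a) \<inter> framed_sets n a' (k - a') = {}" if "a \<noteq> a'" for a a'
    using that framed_sets_disjoint by (metis inf_commute linorder_neqE_nat)
  ultimately have "card (\<Union>a\<le>k. framed_sets n a (k - a)) = (\<Sum>a\<le>k. card (framed_sets n a (k - a)))"
    by (intro card_UN_disjoint) auto
  also have "\<dots> = (\<Sum>a\<le>k. if k + 2 \<le> n then 2 ^ (n - k - 2) else 0)"
    by (intro sum.cong) (auto simp: card_framed_sets)
  finally show ?thesis by simp
qed

theorem mainTheorem1:
  fixes n k :: nat
  assumes "n \<ge> 1" and "k \<le> n"
  shows "card {\<pi>. \<pi> permutes {1..n} \<and> grassmannian n \<pi> \<and> card (fixed_points n \<pi>) = k} =
           (if k = n then 1 else if k = n - 1 then 0 else (k + 1) * 2 ^ (n - k - 2))"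
proof (cases "k = n")
  case True
  then show ?thesis using grassmannian_all_fixed by simp
next
  case False
  with assms have "k < n" by simp
  have "inj_on (grass_perm n) (\<Union>a\<le>k. framed_sets n a (k - a))"
    by (rule inj_on_subset[OF inj_on_grass_perm])
      (use framed_sets_subset grass_perm_framed_not_id in blast)
  then have "card {\<pi>. \<pi> permutes {1..n} \<and> grassmannian n \<pi> \<and> card (fixed_points n \<pi>) = k}
      = card (\<Union>a\<le>k. framed_sets n a (k - a))"
    unfolding grassmannian_fixed_points_eq_image[OF \<open>k < n\<close>] by (rule card_image)
  also have "\<dots> = (if k + 2 \<le> n then (k + 1) * 2 ^ (n - k - 2) else 0)"
    by (rule card_Union_framed_sets)
  finally show ?thesis using \<open>k < n\<close> by (cases "k + 2 \<le> n") auto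
qed

end
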